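(* Let $A$ be a finite alphabet, $b\in A$ a letter, and $u$ a word over $A$ not ending with $b$. If $\vdash^*_{\{u\}}$ is not a well quasi-order on $L^{\epsilon}_{\vdash_{\{u\}}}$, then for every $k\ge1$, $\vdash^*_{\{ub^k\}}$ is not a well quasi-order on $L^{\epsilon}_{\vdash_{\{ub^k\}}}$. Symmetrically (Lemma 9), if $u$ does not begin with $b$ and $\vdash^*_{\{u\}}$ is not a wqo on $L^{\epsilon}_{\vdash_{\{u\}}}$, then for every $k\ge1$, $\vdash^*_{\{b^ku\}}$ is not a wqo on $L^{\epsilon}_{\vdash_{\{b^ku\}}}$.
   Context: For words $u,v$, the shuffle $u \sqcup\!\sqcup v$ is the set of all words $u_1v_1\cdots u_kv_k$ with $k\ge 1$, $u=u_1\cdots u_k$, $v=v_1\cdots v_k$ (pieces possibly empty). For a finite set $I$ of words, $v \vdash_I w$ means $w \in v \sqcup\!\sqcup u$ for some $u\in I$; $\vdash_I^*$ is its reflexive-transitive closure and $L^{\epsilon}_{\vdash_I}=\{w : \epsilon \vdash_I^* w\}$. A quasi-order $\le$ on $S$ is a well quasi-order iff every infinite sequence $s_1,s_2,\dots$ in $S$ has $i<j$ with $s_i\le s_j$. *)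

theory Defs
  imports Main
begin

definition shuffle_step :: "'a list set \<Rightarrow> 'a list \<Rightarrow> 'a list \<Rightarrow> bool" where
  "shuffle_step I v w \<longleftrightarrow> (\<exists>u\<in>I. w \<in> shuffles v u)"

definition shuffle_deriv :: "'a list set \<Rightarrow> 'a list \<Rightarrow> 'a list \<Rightarrow> bool" where
  "shuffle_deriv I = (shuffle_step I)\<^sup>*\<^sup>*"

definition shuffle_lang :: "'a list set \<Rightarrow> 'a list set" where
  "shuffle_lang I = {w. shuffle_deriv I [] w}"

definition wqo_on_set :: "('b \<Rightarrow> 'b \<Rightarrow> bool) \<Rightarrow> 'b set \<Rightarrow> bool" where
  "wqo_on_set le S \<longleftrightarrow>
     (\<forall>x\<in>S. le x x) \<and>
     (\<forall>x\<in>S. \<forall>y\<in>S. \<forall>z\<in>S. le x y \<longrightarrow> le y z \<longrightarrow> le x z) \<and>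
     (\<forall>f::nat \<Rightarrow> 'b. (\<forall>i. f i \<in> S) \<longrightarrow> (\<exists>i j. i < j \<and> le (f i) (f j)))"

end

theory Submission
  imports Defs
begin

text \<open>Let v = u b^k. A word w derived from u in n steps is padded to w b^(kn); padding turns
  each u-step into a v-step inserting its b^k at the very end, so it maps the language of u into
  that of v. Conversely, as u does not end with b, a v-step lengthens the final block of b's of a
  word by at most k, so a word derived from v in n steps ends in at most kn letters b. A padded
  word attains this bound, which forces every v-derivation of it to consist of padded words, each
  step being a padded u-step. Thus padding reflects derivability and maps bad sequences for u to
  bad sequences for v. Reversal reduces the case b^k u to u b^k.\<close>

lemma wqo_on_setD:
  fixes f :: "nat \<Rightarrow> 'a"
  assumes "wqo_on_set le S" and "\<forall>i. f i \<in> S"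
  shows "\<exists>i j. i < j \<and> le (f i) (f j)"
  using assms unfolding wqo_on_set_def by blast

lemma wqo_on_set_if_reflecting:
  assumes "reflp le" and "transp le" and "wqo_on_set le' T" and "g ` S \<subseteq> T"
    and "\<And>x y. x \<in> S \<Longrightarrow> y \<in> S \<Longrightarrow> le' (g x) (g y) \<Longrightarrow> le x y"
  shows "wqo_on_set le S"
  unfolding wqo_on_set_def
proof (intro conjI ballI allI impI)
  show "le x x" for x
    using assms(1) by (rule reflpD)
  show "le x z" if "le x y" "le y z" for x y z
    using assms(2) that by (rule transpD)
  fix f :: "nat \<Rightarrow> _"
  assume "\<forall>i. f i \<in> S"
  then have "\<forall>i. (g \<circ> f) i \<in> T"
    using assms(4) by auto
  then obtain i j where "i < j" "le' (g (f i)) (g (f j))"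
    using wqo_on_setD[OF assms(3), of "g \<circ> f"] by auto
  then show "\<exists>i j. i < j \<and> le (f i) (f j)"
    using assms(5) \<open>\<forall>i. f i \<in> S\<close> by blast
qed

lemma append_in_shufflesI:
  "a \<in> shuffles x u \<Longrightarrow> c \<in> shuffles d e \<Longrightarrow> a @ c \<in> shuffles (x @ d) (u @ e)"
proof (induction a arbitrary: x u)
  case Nil then show ?case by simp
next
  case (Cons z a)
  from Cons.prems(1) show ?case
    unfolding Cons_in_shuffles_iff
  proof (elim disjE conjE)
    assume "x \<noteq> []" "hd x = z" "a \<in> shuffles (tl x) u"
    then show ?thesis using Cons.IH[of "tl x" u] Cons.prems(2)
      by (cases x) (auto simp: Cons_in_shuffles_iff)
  next
    assume "u \<noteq> []" "hd u = z" "a \<in> shuffles x (tl u)"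
    then show ?thesis using Cons.IH[of x "tl u"] Cons.prems(2)
      by (cases u) (auto simp: Cons_in_shuffles_iff)
  qed
qed

lemma append_in_shuffles_self: "xs @ ys \<in> shuffles xs ys"
  using append_in_shufflesI[of xs xs "[]" ys "[]" ys] by simp

lemma rev_in_shuffles:
  "y \<in> shuffles x u \<Longrightarrow> rev y \<in> shuffles (rev x) (rev u)"
proof (induction y arbitrary: x u)
  case Nil then show ?case by simp
next
  case (Cons z y)
  from Cons.prems(1) show ?case
    unfolding Cons_in_shuffles_iff
  proof (elim disjE conjE)
    assume "x \<noteq> []" "hd x = z" "y \<in> shuffles (tl x) u"
    then show ?thesis
      using Cons.IH[of "tl x" u] append_in_shufflesI[of "rev y" "rev (tl x)" "rev u" "[z]" "[z]" "[]"]
      by (cases x) auto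
  next
    assume "u \<noteq> []" "hd u = z" "y \<in> shuffles x (tl u)"
    then show ?thesis
      using Cons.IH[of x "tl u"] append_in_shufflesI[of "rev y" "rev x" "rev (tl u)" "[z]" "[]" "[z]"]
      by (cases u) auto
  qed
qed

lemma append_in_shufflesD:
  "y1 @ y2 \<in> shuffles t z \<Longrightarrow>
    \<exists>t1 t2 z1 z2. t = t1 @ t2 \<and> z = z1 @ z2 \<and> y1 \<in> shuffles t1 z1 \<and> y2 \<in> shuffles t2 z2"
proof (induction y1 arbitrary: t z)
  case Nil then show ?case by (metis append_Nil Nil_in_shufflesI)
next
  case (Cons a y1)
  have "t \<noteq> [] \<and> hd t = a \<and> y1 @ y2 \<in> shuffles (tl t) z \<or>
        z \<noteq> [] \<and> hd z = a \<and> y1 @ y2 \<in> shuffles t (tl z)"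
    using Cons.prems unfolding append_Cons Cons_in_shuffles_iff .
  then show ?case
  proof (elim disjE conjE)
    assume "t \<noteq> []" "hd t = a" "y1 @ y2 \<in> shuffles (tl t) z"
    then obtain t1 t2 z1 z2 where "tl t = t1 @ t2" "z = z1 @ z2"
      "y1 \<in> shuffles t1 z1" "y2 \<in> shuffles t2 z2"
      using Cons.IH by blast
    moreover have "t = (a # t1) @ t2"
      using \<open>t \<noteq> []\<close> \<open>hd t = a\<close> \<open>tl t = t1 @ t2\<close> by (cases t) auto
    moreover have "a # y1 \<in> shuffles (a # t1) z1"
      using \<open>y1 \<in> shuffles t1 z1\<close> by (rule Cons_in_shuffles_leftI)
    ultimately show ?thesis by blast
  next
    assume "z \<noteq> []" "hd z = a" "y1 @ y2 \<in> shuffles t (tl z)"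
    then obtain t1 t2 z1 z2 where "t = t1 @ t2" "tl z = z1 @ z2"
      "y1 \<in> shuffles t1 z1" "y2 \<in> shuffles t2 z2"
      using Cons.IH by blast
    moreover have "z = (a # z1) @ z2"
      using \<open>z \<noteq> []\<close> \<open>hd z = a\<close> \<open>tl z = z1 @ z2\<close> by (cases z) auto
    moreover have "a # y1 \<in> shuffles t1 (a # z1)"
      using \<open>y1 \<in> shuffles t1 z1\<close> by (rule Cons_in_shuffles_rightI)
    ultimately show ?thesis by blast
  qed
qed

lemma replicate_if_set_subset_singleton: "set xs \<subseteq> {b} \<Longrightarrow> xs = replicate (length xs) b"
  by (metis replicate_eqI singletonD subsetD)

lemma append_replicate_eq_appendD:
  assumes "u \<noteq> []" "last u \<noteq> b" "u @ replicate k b = z1 @ z2" "set z2 \<subseteq> {b}"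
  shows "\<exists>j\<le>k. z2 = replicate j b \<and> z1 = u @ replicate (k - j) b"
proof -
  from assms(3) obtain us where
    "u = z1 @ us \<and> us @ replicate k b = z2 \<or> u @ us = z1 \<and> replicate k b = us @ z2"
    by (auto simp: append_eq_append_conv2)
  then show ?thesis
  proof (elim disjE conjE)
    assume u: "u = z1 @ us" and z2: "us @ replicate k b = z2"
    have "us = []"
    proof (rule ccontr)
      assume "us \<noteq> []"
      then have "last u = last us" using u by simp
      moreover have "last us \<in> set z2" using \<open>us \<noteq> []\<close> z2 by auto
      ultimately have "last u \<in> set z2" by simp
      then show False using assms(2,4) by auto
    qed
    then show ?thesis using u z2 by auto
  next
    assume z1: "u @ us = z1" and rep: "replicate k b = us @ z2"
    have "set us \<subseteq> {b}" "set z2 \<subseteq> {b}" using arg_cong[OF rep, of set] assms(4) by auto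
    then have us: "us = replicate (length us) b" and z2: "z2 = replicate (length z2) b"
      by (simp_all add: replicate_if_set_subset_singleton)
    have "length us + length z2 = k" using arg_cong[OF rep, of length] by simp
    then have "us = replicate (k - length z2) b" "length z2 \<le> k"
      using us by (metis add_diff_cancel_right', linarith)
    then show ?thesis using z1 z2 by blast
  qed
qed

lemma shuffle_deriv_reflp: "reflp (shuffle_deriv I)"
  and shuffle_deriv_transp: "transp (shuffle_deriv I)"
  by (simp_all add: shuffle_deriv_def)

lemma wqo_shuffle_lang_if_reflecting:
  assumes "wqo_on_set (shuffle_deriv J) (shuffle_lang J)" and "g ` shuffle_lang I \<subseteq> shuffle_lang J"
    and "\<And>x y. x \<in> shuffle_lang I \<Longrightarrow> y \<in> shuffle_lang I \<Longrightarrow>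
      shuffle_deriv J (g x) (g y) \<Longrightarrow> shuffle_deriv I x y"
  shows "wqo_on_set (shuffle_deriv I) (shuffle_lang I)"
  using shuffle_deriv_reflp shuffle_deriv_transp assms by (rule wqo_on_set_if_reflecting)

lemma shuffle_lang_Nil: "shuffle_lang {[]} = {[]}"
proof -
  have "shuffle_deriv {[]} [] w \<Longrightarrow> w = []" for w :: "'a list"
    unfolding shuffle_deriv_def
    by (induction rule: rtranclp_induct) (auto simp: shuffle_step_def)
  then show ?thesis
    unfolding shuffle_lang_def by (auto simp: shuffle_deriv_def)
qed

lemma wqo_shuffle_lang_Nil: "wqo_on_set (shuffle_deriv {[]}) (shuffle_lang {[]})"
  unfolding wqo_on_set_def shuffle_lang_Nil by (auto simp: shuffle_deriv_def)

lemma shuffle_deriv_rev: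
  "shuffle_deriv {u} x y \<Longrightarrow> shuffle_deriv {rev u} (rev x) (rev y)"
  unfolding shuffle_deriv_def
proof (induction rule: rtranclp_induct)
  case (step y z)
  then have "shuffle_step {rev u} (rev y) (rev z)"
    unfolding shuffle_step_def using rev_in_shuffles by blast
  with step.IH show ?case by (rule rtranclp.rtrancl_into_rtrancl)
qed simp

lemma wqo_shuffle_lang_rev:
  assumes "wqo_on_set (shuffle_deriv {rev u}) (shuffle_lang {rev u})"
  shows "wqo_on_set (shuffle_deriv {u}) (shuffle_lang {u})"
proof (rule wqo_shuffle_lang_if_reflecting[OF assms, of rev])
  show "rev ` shuffle_lang {u} \<subseteq> shuffle_lang {rev u}"
    unfolding shuffle_lang_def using shuffle_deriv_rev[of u "[]"] by auto
  show "shuffle_deriv {u} x y" if "shuffle_deriv {rev u} (rev x) (rev y)" for x y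
    using shuffle_deriv_rev[OF that] by simp
qed

lemma length_dvd_if_in_shuffle_lang:
  assumes "w \<in> shuffle_lang {u}"
  shows "length u dvd length w"
  using assms unfolding shuffle_lang_def shuffle_deriv_def mem_Collect_eq
proof (induction rule: rtranclp_induct)
  case (step x y)
  then show ?case by (auto simp: shuffle_step_def dest: length_shuffles)
qed simp

lemma shuffle_lang_trailing_replicate_bound:
  assumes u: "u \<noteq> []" "last u \<noteq> b"
    and "y \<in> shuffle_lang {u @ replicate k b}" and "y = x @ replicate m b"
  shows "m * (length u + k) \<le> k * length y"
  using assms(3,4) unfolding shuffle_lang_def shuffle_deriv_def mem_Collect_eq
proof (induction arbitrary: x m rule: rtranclp_induct)
  case (step s y)
  have sh: "y \<in> shuffles s (u @ replicate k b)"
    using step.hyps(2) unfolding shuffle_step_def by simp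
  then have "x @ replicate m b \<in> shuffles s (u @ replicate k b)"
    using step.prems by simp
  from append_in_shufflesD[OF this] obtain s1 s2 z1 z2 where
    s: "s = s1 @ s2" and v: "u @ replicate k b = z1 @ z2" and bs: "replicate m b \<in> shuffles s2 z2"
    by blast
  have "set s2 \<subseteq> {b}" "set z2 \<subseteq> {b}"
    using set_shuffles[OF bs] by auto
  obtain j where j: "j \<le> k" "z2 = replicate j b"
    using append_replicate_eq_appendD[OF u v \<open>set z2 \<subseteq> {b}\<close>] by blast
  obtain n where s2: "s2 = replicate n b"
    using replicate_if_set_subset_singleton[OF \<open>set s2 \<subseteq> {b}\<close>] by blast
  have "m = n + j"
    using length_shuffles[OF bs] s2 j(2) by simp
  have "m * (length u + k) = n * (length u + k) + j * (length u + k)"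
    using \<open>m = n + j\<close> by (simp add: algebra_simps)
  also have "\<dots> \<le> k * length s + k * (length u + k)"
    using step.IH[OF s[unfolded s2]] j(1) by (intro add_mono mult_right_mono) simp_all
  also have "\<dots> = k * length y"
    using length_shuffles[OF sh] by (simp add: algebra_simps)
  finally show ?case .
qed simp

lemma shuffle_step_append_replicateD:
  assumes u: "u \<noteq> []" "last u \<noteq> b"
    and s: "s \<in> shuffle_lang {u @ replicate k b}"
    and step: "shuffle_step {u @ replicate k b} s (t @ replicate (k * c) b)"
    and t: "length t = c * length u"
  shows "\<exists>c' t'. c = Suc c' \<and> s = t' @ replicate (k * c') b \<and> length t' = c' * length u \<and>
    shuffle_step {u} t' t"
proof -
  let ?p = "length u"
  have sh: "t @ replicate (k * c) b \<in> shuffles s (u @ replicate k b)"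
    using step unfolding shuffle_step_def by simp
  from append_in_shufflesD[OF sh] obtain s1 r z1 z2 where
    sp: "s = s1 @ r" "u @ replicate k b = z1 @ z2" "t \<in> shuffles s1 z1"
      "replicate (k * c) b \<in> shuffles r z2"
    by blast
  have "set r \<subseteq> {b}" "set z2 \<subseteq> {b}"
    using set_shuffles[OF sp(4)] by auto
  obtain j where j: "j \<le> k" "z2 = replicate j b" "z1 = u @ replicate (k - j) b"
    using append_replicate_eq_appendD[OF u sp(2) \<open>set z2 \<subseteq> {b}\<close>] by blast
  obtain n where r: "r = replicate n b"
    using replicate_if_set_subset_singleton[OF \<open>set r \<subseteq> {b}\<close>] by blast
  have "n + j = k * c"
    using length_shuffles[OF sp(4)] r j(2) by simp
  have "length s + ?p + k = c * ?p + k * c"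
    using length_shuffles[OF sh] t by simp
  then obtain c' where c: "c = Suc c'" and ls: "length s = c' * (?p + k)"
    using u(1) by (cases c) (auto simp: algebra_simps)
  have "n * (?p + k) \<le> k * length s"
    using shuffle_lang_trailing_replicate_bound[OF u s sp(1)[unfolded r]] .
  then have "n \<le> k * c'"
    using ls u(1) by simp
  then have "j = k" "n = k * c'"
    using \<open>n + j = k * c\<close> c j(1) by simp_all
  then have "z1 = u"
    using j(3) by simp
  then have "length s1 = c' * ?p" "shuffle_step {u} s1 t"
    using length_shuffles[OF sp(3)] t c sp(3) by (auto simp: shuffle_step_def)
  then show ?thesis
    using c sp(1) r \<open>n = k * c'\<close> by blast
qed

lemma shuffle_deriv_append_replicateD:
  assumes u: "u \<noteq> []" "last u \<noteq> b"
    and "shuffle_deriv {u @ replicate k b} x (w @ replicate (k * n) b)"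
    and "x \<in> shuffle_lang {u @ replicate k b}"
    and "length w = n * length u"
  shows "\<exists>c t. x = t @ replicate (k * c) b \<and> length t = c * length u \<and> shuffle_deriv {u} t w"
  using assms(3,4) unfolding shuffle_deriv_def
proof (induction rule: converse_rtranclp_induct)
  case base
  then show ?case using assms(5) by blast
next
  case (step s s')
  have "s' \<in> shuffle_lang {u @ replicate k b}"
    using step.prems step.hyps(1) unfolding shuffle_lang_def shuffle_deriv_def
    by (auto intro: rtranclp.rtrancl_into_rtrancl)
  then obtain c t where t: "s' = t @ replicate (k * c) b" "length t = c * length u"
    "(shuffle_step {u})\<^sup>*\<^sup>* t w"
    using step.IH by blast
  obtain c' t' where "s = t' @ replicate (k * c') b" "length t' = c' * length u"
    "shuffle_step {u} t' t"
    using shuffle_step_append_replicateD[OF u step.prems _ t(2)] step.hyps(1) t(1) by blast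
  then show ?case
    using t(3) by (blast intro: converse_rtranclp_into_rtranclp)
qed

definition padded :: "nat \<Rightarrow> 'a \<Rightarrow> 'a list \<Rightarrow> 'a list \<Rightarrow> 'a list" where
  "padded k b u w = w @ replicate (k * (length w div length u)) b"

lemma padded_eq_append_replicate:
  "u \<noteq> [] \<Longrightarrow> length w = n * length u \<Longrightarrow> padded k b u w = w @ replicate (k * n) b"
  by (simp add: padded_def)

lemma padded_in_shuffle_lang:
  assumes "u \<noteq> []" and "w \<in> shuffle_lang {u}"
  shows "padded k b u w \<in> shuffle_lang {u @ replicate k b}"
  using assms(2) unfolding shuffle_lang_def shuffle_deriv_def mem_Collect_eq
proof (induction rule: rtranclp_induct)
  case base
  then show ?case by (simp add: padded_def)
next
  case (step x y)
  have y: "y \<in> shuffles x u"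
    using step.hyps(2) unfolding shuffle_step_def by simp
  let ?r = "replicate (k * (length x div length u)) b"
  have "length y div length u = Suc (length x div length u)"
    using length_shuffles[OF y] assms(1) by (simp add: div_add_self2)
  then have "padded k b u y = y @ ?r @ replicate k b"
    by (simp add: padded_def replicate_add[symmetric])
  also have "\<dots> \<in> shuffles (x @ ?r) (u @ replicate k b)"
    using append_in_shufflesI[OF y append_in_shuffles_self] .
  finally have "shuffle_step {u @ replicate k b} (padded k b u x) (padded k b u y)"
    unfolding shuffle_step_def padded_def by simp
  with step.IH show ?case by (rule rtranclp.rtrancl_into_rtrancl)
qed

lemma padded_reflects_shuffle_deriv:
  assumes u: "u \<noteq> []" "last u \<noteq> b"
    and x: "x \<in> shuffle_lang {u}" and y: "y \<in> shuffle_lang {u}"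
    and d: "shuffle_deriv {u @ replicate k b} (padded k b u x) (padded k b u y)"
  shows "shuffle_deriv {u} x y"
proof -
  let ?p = "length u"
  obtain m where m: "length x = m * ?p"
    using length_dvd_if_in_shuffle_lang[OF x] by (metis dvdE mult.commute)
  obtain n where n: "length y = n * ?p"
    using length_dvd_if_in_shuffle_lang[OF y] by (metis dvdE mult.commute)
  have "shuffle_deriv {u @ replicate k b} (padded k b u x) (y @ replicate (k * n) b)"
    using d padded_eq_append_replicate[OF u(1) n] by simp
  from shuffle_deriv_append_replicateD[OF u this padded_in_shuffle_lang[OF u(1) x] n]
  obtain c t where t: "padded k b u x = t @ replicate (k * c) b" "length t = c * ?p"
    "shuffle_deriv {u} t y"
    by blast
  have px: "padded k b u x = x @ replicate (k * m) b"
    using padded_eq_append_replicate[OF u(1) m] .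
  have "m * (?p + k) = c * (?p + k)"
    using arg_cong[OF t(1), of length] px m t(2) by (simp add: algebra_simps)
  then have "m = c"
    using u(1) by simp
  then have "x = t"
    using t(1,2) px m by simp
  with t(3) show ?thesis by simp
qed

lemma wqo_shuffle_lang_if_append_replicate:
  assumes "u \<noteq> []" "last u \<noteq> b"
    and "wqo_on_set (shuffle_deriv {u @ replicate k b}) (shuffle_lang {u @ replicate k b})"
  shows "wqo_on_set (shuffle_deriv {u}) (shuffle_lang {u})"
proof (rule wqo_shuffle_lang_if_reflecting[OF assms(3), of "padded k b u"])
  show "padded k b u ` shuffle_lang {u} \<subseteq> shuffle_lang {u @ replicate k b}"
    using padded_in_shuffle_lang[OF assms(1)] by blast
qed (rule padded_reflects_shuffle_deriv[OF assms(1,2)])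

theorem lemma8:
  fixes A :: "'a set" and b :: 'a and u :: "'a list"
  assumes "finite A" and "b \<in> A" and "u \<in> lists A"
  shows "(\<not> (u \<noteq> [] \<and> last u = b) \<and>
          \<not> wqo_on_set (shuffle_deriv {u}) (shuffle_lang {u}) \<longrightarrow>
          (\<forall>k\<ge>1. \<not> wqo_on_set (shuffle_deriv {u @ replicate k b})
                                  (shuffle_lang {u @ replicate k b})))
       \<and> (\<not> (u \<noteq> [] \<and> hd u = b) \<and>
          \<not> wqo_on_set (shuffle_deriv {u}) (shuffle_lang {u}) \<longrightarrow>
          (\<forall>k\<ge>1. \<not> wqo_on_set (shuffle_deriv {replicate k b @ u})
                                  (shuffle_lang {replicate k b @ u})))"
proof (intro conjI impI allI; elim conjE)
  fix k :: nat
  assume "\<not> (u \<noteq> [] \<and> last u = b)" and bad: "\<not> wqo_on_set (shuffle_deriv {u}) (shuffle_lang {u})"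
  moreover from bad have "u \<noteq> []"
    using wqo_shuffle_lang_Nil by auto
  ultimately show "\<not> wqo_on_set (shuffle_deriv {u @ replicate k b}) (shuffle_lang {u @ replicate k b})"
    using wqo_shuffle_lang_if_append_replicate[of u b k] by auto
next
  fix k :: nat
  assume "\<not> (u \<noteq> [] \<and> hd u = b)" and bad: "\<not> wqo_on_set (shuffle_deriv {u}) (shuffle_lang {u})"
  moreover from bad have "u \<noteq> []"
    using wqo_shuffle_lang_Nil by auto
  ultimately have "rev u \<noteq> []" "last (rev u) \<noteq> b"
    by (simp_all add: last_rev)
  show "\<not> wqo_on_set (shuffle_deriv {replicate k b @ u}) (shuffle_lang {replicate k b @ u})"
  proof
    assume "wqo_on_set (shuffle_deriv {replicate k b @ u}) (shuffle_lang {replicate k b @ u})"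
    then have "wqo_on_set (shuffle_deriv {rev u @ replicate k b}) (shuffle_lang {rev u @ replicate k b})"
      using wqo_shuffle_lang_rev[of "rev u @ replicate k b"] by simp
    then have "wqo_on_set (shuffle_deriv {rev u}) (shuffle_lang {rev u})"
      by (rule wqo_shuffle_lang_if_append_replicate[OF \<open>rev u \<noteq> []\<close> \<open>last (rev u) \<noteq> b\<close>])
    then show False
      using bad wqo_shuffle_lang_rev by auto
  qed
qed

end
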